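(* (Positive/negative transfer for large first task.) Fix $\rho$ and $N_B$. Then \[ \lim_{N_A\to\infty}E_{A\to B}(\rho)=2(1-\rho)E_B, \] so for $N_A\gg N_B$, $E_{A\to B}(\rho)<E_B$ when $\rho>1/2$ and $E_{A\to B}(\rho)>E_B$ when $\rho<1/2$.
   Context: $\eta_i\ge0$, $\sum_i\eta_i<\infty$, infinitely many $\eta_i>0$. For sample size $N$: $\kappa>0$ solves $1=\sum_i\eta_i/(\kappa+N\eta_i)$, $\gamma=\sum_iN\eta_i^2/(\kappa+N\eta_i)^2$, $q_i=\kappa/(\kappa+N\eta_i)$; subscripts $A,B$ mean $N=N_A,N_B$. $E_{B,i}=q_{B,i}^2\eta_i^2/(1-\gamma_B)$, $E_B=\sum_iE_{B,i}$, and $E_{A\to B}(\rho)=\sum_i[2(1-\rho)(1-q_{A,i})+q_{A,i}^2/(1-\gamma_A)]E_{B,i}$ (replica-method error on task B after sequential training A→B in the noise-free case). *)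

theory Defs
  imports "HOL-Analysis.Analysis"
begin

definition kappa :: "(nat \<Rightarrow> real) \<Rightarrow> nat \<Rightarrow> real" where
  "kappa \<eta> N = (THE \<kappa>. \<kappa> > 0 \<and> (\<Sum>i. \<eta> i / (\<kappa> + real N * \<eta> i)) = 1)"

definition gamma :: "(nat \<Rightarrow> real) \<Rightarrow> nat \<Rightarrow> real" where
  "gamma \<eta> N = (\<Sum>i. real N * (\<eta> i)\<^sup>2 / (kappa \<eta> N + real N * \<eta> i)\<^sup>2)"

definition qf :: "(nat \<Rightarrow> real) \<Rightarrow> nat \<Rightarrow> nat \<Rightarrow> real" where
  "qf \<eta> N i = kappa \<eta> N / (kappa \<eta> N + real N * \<eta> i)"

definition E_i :: "(nat \<Rightarrow> real) \<Rightarrow> nat \<Rightarrow> nat \<Rightarrow> real" where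
  "E_i \<eta> NB i = (qf \<eta> NB i)\<^sup>2 * (\<eta> i)\<^sup>2 / (1 - gamma \<eta> NB)"

definition E_single :: "(nat \<Rightarrow> real) \<Rightarrow> nat \<Rightarrow> real" where
  "E_single \<eta> NB = (\<Sum>i. E_i \<eta> NB i)"

definition E_seq :: "(nat \<Rightarrow> real) \<Rightarrow> nat \<Rightarrow> nat \<Rightarrow> real \<Rightarrow> real" where
  "E_seq \<eta> NA NB \<rho> = (\<Sum>i. (2 * (1 - \<rho>) * (1 - qf \<eta> NA i)
       + (qf \<eta> NA i)\<^sup>2 / (1 - gamma \<eta> NA)) * E_i \<eta> NB i)"

end

theory Submission
  imports Defs "HOL-Real_Asymp.Real_Asymp"
begin

text \<open>
  As \<open>N\<^sub>A \<rightarrow> \<infinity>\<close> the self-consistent constant \<open>\<kappa>\<^sub>A\<close> tends to \<open>0\<close>, because the left-hand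
  side \<open>\<Sum>\<^sub>i \<eta>\<^sub>i / (\<kappa> + N \<eta>\<^sub>i)\<close> of its defining equation tends to \<open>0\<close> for every fixed \<open>\<kappa> > 0\<close>.
  Hence every \<open>q\<^sub>A\<^sub>,\<^sub>i \<le> \<kappa>\<^sub>A / \<eta>\<^sub>i\<close> tends to \<open>0\<close>, and so does \<open>q\<^sub>A\<^sub>,\<^sub>i\<^sup>2 / (1 - \<gamma>\<^sub>A) \<le> \<kappa>\<^sub>A / \<eta>\<^sub>i\<close>,
  which follows from \<open>1 - \<gamma> = \<Sum>\<^sub>i \<kappa> \<eta>\<^sub>i / (\<kappa> + N \<eta>\<^sub>i)\<^sup>2\<close>. Termwise the summand of
  \<open>E\<^sub>A\<^sub>\<rightarrow>\<^sub>B(\<rho>)\<close> thus tends to \<open>2(1 - \<rho>) E\<^sub>B\<^sub>,\<^sub>i\<close>; since \<open>\<kappa>\<^sub>A \<le> \<Sum>\<^sub>i \<eta>\<^sub>i\<close> uniformly in \<open>N\<^sub>A\<close>, the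
  summands are dominated by a summable sequence and Tannery's theorem gives the limit.
\<close>

lemma tendsto_suminf_dominated:
  fixes a :: "nat \<Rightarrow> nat \<Rightarrow> real"
  assumes "\<And>i. (\<lambda>n. a i n) \<longlonglongrightarrow> b i"
    and "\<And>i n. \<bar>a i n\<bar> \<le> M i" and "summable M"
  shows "(\<lambda>n. \<Sum>i. a i n) \<longlonglongrightarrow> (\<Sum>i. b i)"
  using tannerys_theorem[of a b sequentially M] assms by (simp add: always_eventually)

lemma summable_power2_of_nonneg:
  fixes e :: "nat \<Rightarrow> real"
  assumes nonneg: "\<And>i. e i \<ge> 0" and "summable e"
  shows "summable (\<lambda>i. (e i)\<^sup>2)"
proof -
  have "eventually (\<lambda>i. e i < 1) sequentially"
    using summable_LIMSEQ_zero[OF \<open>summable e\<close>] by (intro order_tendstoD) auto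
  then obtain M where M: "\<And>i. i \<ge> M \<Longrightarrow> e i < 1" by (auto simp: eventually_sequentially)
  show ?thesis
  proof (rule summable_comparison_test'[OF \<open>summable e\<close>, of M])
    fix i assume "i \<ge> M"
    then show "norm ((e i)\<^sup>2) \<le> e i"
      using M[OF \<open>i \<ge> M\<close>] nonneg[of i] by (simp add: power2_eq_square mult_left_le_one_le)
  qed
qed

locale spectrum =
  fixes \<eta> :: "nat \<Rightarrow> real"
  assumes eta_nonneg: "\<And>i. \<eta> i \<ge> 0"
    and eta_summable: "summable \<eta>"
    and eta_infinite_support: "infinite {i. \<eta> i > 0}"
begin

lemma obtain_eta_pos:
  obtains j where "\<eta> j > 0"
  using eta_infinite_support not_finite_existsD by auto

lemma denominator_pos: "k > 0 \<Longrightarrow> k + real N * \<eta> i > 0"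
  using eta_nonneg[of i] by (simp add: add_pos_nonneg)

definition resolvent_sum :: "nat \<Rightarrow> real \<Rightarrow> real" where
  "resolvent_sum N k = (\<Sum>i. \<eta> i / (k + real N * \<eta> i))"

lemma summable_eta_div: "summable (\<lambda>i. \<eta> i / c)"
  by (rule summable_divide[OF eta_summable])

lemma resolvent_term_le: "k > 0 \<Longrightarrow> \<eta> i / (k + real N * \<eta> i) \<le> \<eta> i / k"
  using eta_nonneg[of i] by (simp add: frac_le)

lemma summable_resolvent_terms:
  assumes "k > 0"
  shows "summable (\<lambda>i. \<eta> i / (k + real N * \<eta> i))"
proof (rule summable_comparison_test'[OF summable_eta_div[of k], where N=0])
  fix i
  show "norm (\<eta> i / (k + real N * \<eta> i)) \<le> \<eta> i / k"
    using resolvent_term_le[OF assms, of i N] eta_nonneg[of i] assms by simp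
qed

lemma resolvent_sum_le: "k > 0 \<Longrightarrow> resolvent_sum N k \<le> suminf \<eta> / k"
  unfolding resolvent_sum_def suminf_divide[OF eta_summable, symmetric]
  by (intro suminf_le resolvent_term_le summable_resolvent_terms summable_eta_div)

lemma resolvent_sum_strict_antimono:
  assumes "0 < a" "a < b"
  shows "resolvent_sum N b < resolvent_sum N a"
proof -
  have sa: "summable (\<lambda>i. \<eta> i / (a + real N * \<eta> i))"
    and sb: "summable (\<lambda>i. \<eta> i / (b + real N * \<eta> i))"
    using assms summable_resolvent_terms by auto
  have le: "\<eta> i / (b + real N * \<eta> i) \<le> \<eta> i / (a + real N * \<eta> i)" for i
    using assms eta_nonneg[of i] denominator_pos[of a N i] denominator_pos[of b N i]
    by (intro divide_left_mono) auto
  obtain j where j: "\<eta> j > 0" by (rule obtain_eta_pos)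
  have "\<eta> j / (b + real N * \<eta> j) < \<eta> j / (a + real N * \<eta> j)"
    using assms j denominator_pos[of a N j] denominator_pos[of b N j]
    by (intro divide_strict_left_mono) auto
  then have "0 < (\<Sum>i. \<eta> i / (a + real N * \<eta> i) - \<eta> i / (b + real N * \<eta> i))"
    using le by (subst suminf_pos_iff) (auto intro!: summable_diff sa sb)
  then show ?thesis
    using suminf_diff[OF sa sb] by (simp add: resolvent_sum_def)
qed

lemma continuous_on_resolvent_sum:
  assumes "k\<^sub>0 > 0"
  shows "continuous_on {k\<^sub>0..} (resolvent_sum N)"
proof (rule uniform_limit_theorem)
  show "uniform_limit {k\<^sub>0..} (\<lambda>n k. \<Sum>i<n. \<eta> i / (k + real N * \<eta> i)) (resolvent_sum N)
      sequentially"
    unfolding resolvent_sum_def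
  proof (rule Weierstrass_m_test[where M="\<lambda>i. \<eta> i / k\<^sub>0"])
    fix i and k :: real assume "k \<in> {k\<^sub>0..}"
    then have "k\<^sub>0 \<le> k + real N * \<eta> i" using eta_nonneg[of i] by (simp add: add_increasing2)
    then show "norm (\<eta> i / (k + real N * \<eta> i)) \<le> \<eta> i / k\<^sub>0"
      using eta_nonneg[of i] assms by (simp add: frac_le)
  qed (rule summable_eta_div)
  have "k + real N * \<eta> i \<noteq> 0" if "k \<in> {k\<^sub>0..}" for k i
    using that assms denominator_pos[of k N i] by simp
  then show "\<forall>\<^sub>F n in sequentially.
      continuous_on {k\<^sub>0..} (\<lambda>k. \<Sum>i<n. \<eta> i / (k + real N * \<eta> i))"
    by (intro always_eventually allI continuous_intros) auto
qed simp

text \<open>Any \<open>N + 2\<close> positive eigenvalues force the sum above \<open>1\<close> at \<open>\<kappa> = min \<eta>\<^sub>i\<close>.\<close>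

lemma resolvent_sum_ge_one: "\<exists>k>0. resolvent_sum N k \<ge> 1"
proof -
  obtain S where S: "finite S" "card S = N + 2" "S \<subseteq> {i. \<eta> i > 0}"
    using infinite_arbitrarily_large[OF eta_infinite_support] by blast
  define k where "k = Min (\<eta> ` S)"
  have "S \<noteq> {}" using S by auto
  then have k: "k > 0" "\<And>i. i \<in> S \<Longrightarrow> k \<le> \<eta> i"
    using S unfolding k_def by (auto simp: Min_gr_iff)
  have term_ge: "1 / (real N + 1) \<le> \<eta> i / (k + real N * \<eta> i)" if "i \<in> S" for i
  proof -
    have "k + real N * \<eta> i \<le> (real N + 1) * \<eta> i"
      using k(2)[OF that] by (simp add: algebra_simps)
    then show ?thesis
      using denominator_pos[OF k(1), of N i] by (simp add: field_simps)
  qed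
  have "1 < (real N + 2) / (real N + 1)" by simp
  also have "\<dots> = (\<Sum>i\<in>S. 1 / (real N + 1))" using S by simp
  also have "\<dots> \<le> (\<Sum>i\<in>S. \<eta> i / (k + real N * \<eta> i))" by (rule sum_mono[OF term_ge])
  also have "\<dots> \<le> resolvent_sum N k"
    unfolding resolvent_sum_def using k(1) eta_nonneg denominator_pos
    by (intro sum_le_suminf summable_resolvent_terms S) (auto intro: divide_nonneg_pos)
  finally show ?thesis using k(1) by auto
qed

lemma ex1_kappa: "\<exists>!k. k > 0 \<and> resolvent_sum N k = 1"
proof (rule ex_ex1I)
  obtain k\<^sub>0 where k\<^sub>0: "k\<^sub>0 > 0" "resolvent_sum N k\<^sub>0 \<ge> 1"
    using resolvent_sum_ge_one by blast
  define k\<^sub>1 where "k\<^sub>1 = k\<^sub>0 + suminf \<eta> + 1"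
  have "suminf \<eta> \<ge> 0" using suminf_nonneg[OF eta_summable eta_nonneg] .
  then have k\<^sub>1: "k\<^sub>0 \<le> k\<^sub>1" "suminf \<eta> < k\<^sub>1" using k\<^sub>0(1) by (auto simp: k\<^sub>1_def)
  have "resolvent_sum N k\<^sub>1 \<le> suminf \<eta> / k\<^sub>1"
    using k\<^sub>0(1) k\<^sub>1 by (intro resolvent_sum_le) auto
  also have "\<dots> < 1" using k\<^sub>1 k\<^sub>0(1) by simp
  finally have "resolvent_sum N k\<^sub>1 \<le> 1" by simp
  moreover have "continuous_on {k\<^sub>0..k\<^sub>1} (resolvent_sum N)"
    using continuous_on_resolvent_sum[OF k\<^sub>0(1)] by (rule continuous_on_subset) auto
  ultimately obtain k where "k\<^sub>0 \<le> k" "resolvent_sum N k = 1"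
    using IVT2'[of "resolvent_sum N" k\<^sub>1 1 k\<^sub>0] k\<^sub>0 k\<^sub>1 by blast
  then show "\<exists>k. k > 0 \<and> resolvent_sum N k = 1" using k\<^sub>0(1) by (intro exI[of _ k]) auto
next
  fix a b assume "a > 0 \<and> resolvent_sum N a = 1" "b > 0 \<and> resolvent_sum N b = 1"
  then show "a = b"
    using resolvent_sum_strict_antimono[of a b N] resolvent_sum_strict_antimono[of b a N]
    by (cases a b rule: linorder_cases) auto
qed

lemma kappa_pos: "kappa \<eta> N > 0"
  and resolvent_sum_kappa: "resolvent_sum N (kappa \<eta> N) = 1"
  using theI'[OF ex1_kappa[of N]] by (auto simp: kappa_def resolvent_sum_def)

lemma kappa_le_suminf: "kappa \<eta> N \<le> suminf \<eta>"
  using resolvent_sum_le[OF kappa_pos[of N], of N] kappa_pos[of N]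
  by (simp add: resolvent_sum_kappa field_simps)

lemma resolvent_sum_tendsto_zero:
  assumes "k > 0"
  shows "(\<lambda>N. resolvent_sum N k) \<longlonglongrightarrow> 0"
proof -
  have "(\<lambda>N. \<Sum>i. \<eta> i / (k + real N * \<eta> i)) \<longlonglongrightarrow> (\<Sum>i. 0)"
  proof (rule tendsto_suminf_dominated[where M="\<lambda>i. \<eta> i / k"])
    fix i
    show "(\<lambda>N. \<eta> i / (k + real N * \<eta> i)) \<longlonglongrightarrow> 0"
    proof (cases "\<eta> i = 0")
      case False
      with eta_nonneg[of i] assms show ?thesis by real_asymp
    qed simp
    show "\<bar>\<eta> i / (k + real N * \<eta> i)\<bar> \<le> \<eta> i / k" for N
      using resolvent_term_le[OF assms, of i N] denominator_pos[OF assms, of N i] eta_nonneg[of i]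
      by simp
  qed (rule summable_eta_div)
  then show ?thesis by (simp add: resolvent_sum_def)
qed

lemma kappa_tendsto_zero: "(\<lambda>N. kappa \<eta> N) \<longlonglongrightarrow> 0"
proof (rule order_tendstoI)
  fix a :: real assume "a < 0"
  then show "\<forall>\<^sub>F N in sequentially. a < kappa \<eta> N"
    using kappa_pos by (simp add: less_trans)
next
  fix \<epsilon> :: real assume "\<epsilon> > 0"
  then have "\<forall>\<^sub>F N in sequentially. resolvent_sum N \<epsilon> < 1"
    using resolvent_sum_tendsto_zero by (intro order_tendstoD) auto
  then show "\<forall>\<^sub>F N in sequentially. kappa \<eta> N < \<epsilon>"
  proof eventually_elim
    case (elim N)
    then show ?case
      using resolvent_sum_strict_antimono[OF \<open>\<epsilon> > 0\<close>, of "kappa \<eta> N" N] resolvent_sum_kappa[of N]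
      by (cases "kappa \<eta> N" \<epsilon> rule: linorder_cases) auto
  qed
qed

text \<open>Since \<open>\<eta>\<^sub>i/(\<kappa> + N\<eta>\<^sub>i) = \<kappa>\<eta>\<^sub>i/(\<kappa> + N\<eta>\<^sub>i)\<^sup>2 + N\<eta>\<^sub>i\<^sup>2/(\<kappa> + N\<eta>\<^sub>i)\<^sup>2\<close>, the
  self-consistency equation rewrites \<open>1 - \<gamma>\<close> as a sum of positive terms.\<close>

lemma one_minus_gamma_eq:
  fixes N :: nat
  defines "k \<equiv> kappa \<eta> N"
  shows "summable (\<lambda>i. k * \<eta> i / (k + real N * \<eta> i)\<^sup>2)"
    and "1 - gamma \<eta> N = (\<Sum>i. k * \<eta> i / (k + real N * \<eta> i)\<^sup>2)"
proof -
  have k: "k > 0" using kappa_pos by (simp add: k_def)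
  note d = denominator_pos[OF k]
  show sa: "summable (\<lambda>i. k * \<eta> i / (k + real N * \<eta> i)\<^sup>2)"
  proof (rule summable_comparison_test'[where g="\<lambda>i. \<eta> i / k" and N=0])
    fix i
    have "k\<^sup>2 \<le> (k + real N * \<eta> i)\<^sup>2" using k eta_nonneg[of i] by (intro power_mono) auto
    then have "k * \<eta> i / (k + real N * \<eta> i)\<^sup>2 \<le> k * \<eta> i / k\<^sup>2"
      using k eta_nonneg[of i] d[of N i] by (intro divide_left_mono) auto
    then show "norm (k * \<eta> i / (k + real N * \<eta> i)\<^sup>2) \<le> \<eta> i / k"
      using k eta_nonneg[of i] by (simp add: power2_eq_square)
  qed (rule summable_eta_div)
  have split: "\<eta> i / (k + real N * \<eta> i)
      = k * \<eta> i / (k + real N * \<eta> i)\<^sup>2 + real N * (\<eta> i)\<^sup>2 / (k + real N * \<eta> i)\<^sup>2" for i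
  proof -
    have "k * \<eta> i / (k + real N * \<eta> i)\<^sup>2 + real N * (\<eta> i)\<^sup>2 / (k + real N * \<eta> i)\<^sup>2
        = \<eta> i * (k + real N * \<eta> i) / ((k + real N * \<eta> i) * (k + real N * \<eta> i))"
      by (simp add: power2_eq_square add_divide_distrib[symmetric] algebra_simps)
    then show ?thesis using d[of N i] by simp
  qed
  have sb: "summable (\<lambda>i. real N * (\<eta> i)\<^sup>2 / (k + real N * \<eta> i)\<^sup>2)"
    using summable_diff[OF summable_resolvent_terms[OF k, of N] sa] by (subst (asm) split) simp
  have "(\<Sum>i. k * \<eta> i / (k + real N * \<eta> i)\<^sup>2 + real N * (\<eta> i)\<^sup>2 / (k + real N * \<eta> i)\<^sup>2) = 1"
    unfolding split[symmetric] using resolvent_sum_kappa[of N] by (simp add: resolvent_sum_def k_def)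
  then have "1 = (\<Sum>i. k * \<eta> i / (k + real N * \<eta> i)\<^sup>2) + gamma \<eta> N"
    using suminf_add[OF sa sb] by (simp add: gamma_def k_def[symmetric])
  then show "1 - gamma \<eta> N = (\<Sum>i. k * \<eta> i / (k + real N * \<eta> i)\<^sup>2)" by simp
qed

lemma kappa_term_nonneg: "0 \<le> kappa \<eta> N * \<eta> i / (kappa \<eta> N + real N * \<eta> i)\<^sup>2"
  using kappa_pos[of N] eta_nonneg[of i] by simp

lemma one_minus_gamma_pos: "1 - gamma \<eta> N > 0"
proof -
  obtain j where j: "\<eta> j > 0" by (rule obtain_eta_pos)
  then have "0 < kappa \<eta> N * \<eta> j / (kappa \<eta> N + real N * \<eta> j)\<^sup>2"
    using kappa_pos[of N] denominator_pos[OF kappa_pos, of N N j] by simp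
  then show ?thesis
    unfolding one_minus_gamma_eq(2)
    using one_minus_gamma_eq(1) kappa_term_nonneg by (subst suminf_pos_iff) auto
qed

lemma kappa_term_le_one_minus_gamma:
  "kappa \<eta> N * \<eta> i / (kappa \<eta> N + real N * \<eta> i)\<^sup>2 \<le> 1 - gamma \<eta> N"
  unfolding one_minus_gamma_eq(2)
  using one_minus_gamma_eq(1) kappa_term_nonneg
  by (intro sum_le_suminf[where I="{i}", simplified]) auto

lemma qf_pos: "qf \<eta> N i > 0"
  and qf_le_one: "qf \<eta> N i \<le> 1"
  using kappa_pos denominator_pos[OF kappa_pos] eta_nonneg[of i]
  by (auto simp: qf_def)

lemma qf_le_kappa_div:
  assumes "N \<ge> 1" "\<eta> i > 0"
  shows "qf \<eta> N i \<le> kappa \<eta> N / \<eta> i"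
proof -
  have "\<eta> i \<le> kappa \<eta> N + real N * \<eta> i"
    using assms kappa_pos[of N] by (simp add: add_increasing mult_le_cancel_right1)
  then show ?thesis
    unfolding qf_def using assms kappa_pos[of N] by (intro divide_left_mono) auto
qed

text \<open>Write \<open>q\<^sup>2 = (\<kappa> / \<eta>\<^sub>i) \<cdot> \<kappa>\<eta>\<^sub>i/(\<kappa> + N\<eta>\<^sub>i)\<^sup>2\<close> and bound the second factor by \<open>1 - \<gamma>\<close>.\<close>

lemma qf_sq_div_le:
  assumes "\<eta> i > 0"
  shows "(qf \<eta> N i)\<^sup>2 / (1 - gamma \<eta> N) \<le> kappa \<eta> N / \<eta> i"
proof -
  let ?k = "kappa \<eta> N" and ?d = "kappa \<eta> N + real N * \<eta> i" and ?G = "1 - gamma \<eta> N"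
  have "(qf \<eta> N i)\<^sup>2 / ?G = ?k / \<eta> i * (?k * \<eta> i / ?d\<^sup>2) / ?G"
    using assms by (simp add: qf_def power2_eq_square field_simps)
  also have "\<dots> \<le> ?k / \<eta> i * ?G / ?G"
    using kappa_term_le_one_minus_gamma one_minus_gamma_pos[of N] kappa_pos[of N] assms
    by (intro divide_right_mono mult_left_mono) auto
  also have "\<dots> = ?k / \<eta> i" using one_minus_gamma_pos[of N] by simp
  finally show ?thesis .
qed

lemma qf_tendsto_zero:
  assumes "\<eta> i > 0"
  shows "(\<lambda>N. qf \<eta> N i) \<longlonglongrightarrow> 0"
proof (rule tendsto_sandwich[where f="\<lambda>_. 0" and h="\<lambda>N. kappa \<eta> N / \<eta> i"])
  show "\<forall>\<^sub>F N in sequentially. qf \<eta> N i \<le> kappa \<eta> N / \<eta> i"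
    using qf_le_kappa_div[OF _ assms] by (auto simp: eventually_sequentially)
  show "(\<lambda>N. kappa \<eta> N / \<eta> i) \<longlonglongrightarrow> 0"
    using tendsto_divide_zero[OF kappa_tendsto_zero] .
qed (use qf_pos in \<open>auto intro: always_eventually less_imp_le\<close>)

lemma qf_sq_div_tendsto_zero:
  assumes "\<eta> i > 0"
  shows "(\<lambda>N. (qf \<eta> N i)\<^sup>2 / (1 - gamma \<eta> N)) \<longlonglongrightarrow> 0"
proof (rule tendsto_sandwich[where f="\<lambda>_. 0" and h="\<lambda>N. kappa \<eta> N / \<eta> i"])
  show "\<forall>\<^sub>F N in sequentially. (qf \<eta> N i)\<^sup>2 / (1 - gamma \<eta> N) \<le> kappa \<eta> N / \<eta> i"
    using qf_sq_div_le[OF assms] by simp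
  show "(\<lambda>N. kappa \<eta> N / \<eta> i) \<longlonglongrightarrow> 0"
    using tendsto_divide_zero[OF kappa_tendsto_zero] .
qed (use one_minus_gamma_pos in \<open>auto intro!: always_eventually allI divide_nonneg_pos\<close>)

lemma E_i_nonneg: "E_i \<eta> N i \<ge> 0"
  using one_minus_gamma_pos[of N] by (simp add: E_i_def)

lemma E_i_pos: "\<eta> i > 0 \<Longrightarrow> E_i \<eta> N i > 0"
  using one_minus_gamma_pos[of N] qf_pos[of N i] by (simp add: E_i_def)

lemma E_i_le: "E_i \<eta> N i \<le> (\<eta> i)\<^sup>2 / (1 - gamma \<eta> N)"
proof -
  have "(qf \<eta> N i)\<^sup>2 * (\<eta> i)\<^sup>2 \<le> 1 * (\<eta> i)\<^sup>2"
    using qf_pos[of N i] qf_le_one[of N i] by (intro mult_right_mono) (auto simp: power_le_one)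
  then show ?thesis
    unfolding E_i_def using one_minus_gamma_pos[of N] by (simp add: divide_right_mono)
qed

lemma summable_E_i: "summable (E_i \<eta> N)"
  using summable_divide[OF summable_power2_of_nonneg[OF eta_nonneg eta_summable]]
  by (rule summable_comparison_test'[where N=0]) (use E_i_nonneg E_i_le in auto)

lemma E_single_pos: "E_single \<eta> N > 0"
proof -
  obtain j where "\<eta> j > 0" by (rule obtain_eta_pos)
  then show ?thesis
    unfolding E_single_def using summable_E_i E_i_nonneg E_i_pos
    by (subst suminf_pos_iff) (auto intro!: exI[of _ j])
qed

lemma E_seq_term_tendsto:
  "(\<lambda>N\<^sub>A. (2 * (1 - \<rho>) * (1 - qf \<eta> N\<^sub>A i) + (qf \<eta> N\<^sub>A i)\<^sup>2 / (1 - gamma \<eta> N\<^sub>A)) * E_i \<eta> N\<^sub>B i)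
    \<longlonglongrightarrow> 2 * (1 - \<rho>) * E_i \<eta> N\<^sub>B i"
proof (cases "\<eta> i > 0")
  case True
  have "(\<lambda>N\<^sub>A. (2 * (1 - \<rho>) * (1 - qf \<eta> N\<^sub>A i) + (qf \<eta> N\<^sub>A i)\<^sup>2 / (1 - gamma \<eta> N\<^sub>A)) * E_i \<eta> N\<^sub>B i)
      \<longlonglongrightarrow> (2 * (1 - \<rho>) * (1 - 0) + 0) * E_i \<eta> N\<^sub>B i"
    by (intro tendsto_intros qf_tendsto_zero qf_sq_div_tendsto_zero True)
  then show ?thesis by simp
next
  case False
  then have "\<eta> i = 0" using eta_nonneg[of i] by simp
  then show ?thesis by (simp add: E_i_def)
qed

lemma E_seq_term_bound:
  "\<bar>(2 * (1 - \<rho>) * (1 - qf \<eta> N\<^sub>A i) + (qf \<eta> N\<^sub>A i)\<^sup>2 / (1 - gamma \<eta> N\<^sub>A)) * E_i \<eta> N\<^sub>B i\<bar>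
    \<le> \<bar>2 * (1 - \<rho>)\<bar> * E_i \<eta> N\<^sub>B i + suminf \<eta> * \<eta> i / (1 - gamma \<eta> N\<^sub>B)"
proof -
  let ?q = "qf \<eta> N\<^sub>A i" and ?E = "E_i \<eta> N\<^sub>B i" and ?G\<^sub>A = "1 - gamma \<eta> N\<^sub>A"
  have q: "0 < ?q" "?q \<le> 1" using qf_pos qf_le_one by auto
  have E: "0 \<le> ?E" using E_i_nonneg .
  have first: "\<bar>2 * (1 - \<rho>) * (1 - ?q) * ?E\<bar> \<le> \<bar>2 * (1 - \<rho>)\<bar> * ?E"
    using q E mult_left_mono[of "1 - ?q" 1 "\<bar>2 * (1 - \<rho>)\<bar> * ?E"]
    by (simp add: abs_mult mult_ac)
  have second: "?q\<^sup>2 / ?G\<^sub>A * ?E \<le> suminf \<eta> * \<eta> i / (1 - gamma \<eta> N\<^sub>B)"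
  proof (cases "\<eta> i > 0")
    case True
    have "?q\<^sup>2 / ?G\<^sub>A * ?E \<le> kappa \<eta> N\<^sub>A / \<eta> i * ((\<eta> i)\<^sup>2 / (1 - gamma \<eta> N\<^sub>B))"
      using qf_sq_div_le[OF True] E_i_le E kappa_pos[of N\<^sub>A] True by (intro mult_mono) auto
    also have "\<dots> = kappa \<eta> N\<^sub>A * \<eta> i / (1 - gamma \<eta> N\<^sub>B)" using True by (simp add: power2_eq_square)
    also have "\<dots> \<le> suminf \<eta> * \<eta> i / (1 - gamma \<eta> N\<^sub>B)"
      using kappa_le_suminf one_minus_gamma_pos[of N\<^sub>B] True
      by (intro divide_right_mono mult_right_mono) auto
    finally show ?thesis .
  qed (use eta_nonneg[of i] in \<open>simp add: E_i_def\<close>)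
  have "0 \<le> ?q\<^sup>2 / ?G\<^sub>A * ?E" using one_minus_gamma_pos[of N\<^sub>A] E by simp
  with first second show ?thesis by (simp add: distrib_right)
qed

theorem E_seq_tendsto: "(\<lambda>N\<^sub>A. E_seq \<eta> N\<^sub>A N\<^sub>B \<rho>) \<longlonglongrightarrow> 2 * (1 - \<rho>) * E_single \<eta> N\<^sub>B"
proof -
  have "(\<lambda>N\<^sub>A. E_seq \<eta> N\<^sub>A N\<^sub>B \<rho>) \<longlonglongrightarrow> (\<Sum>i. 2 * (1 - \<rho>) * E_i \<eta> N\<^sub>B i)"
    unfolding E_seq_def
    by (intro tendsto_suminf_dominated[OF E_seq_term_tendsto E_seq_term_bound]
        summable_add[OF summable_mult[OF summable_E_i] summable_divide[OF summable_mult[OF eta_summable]]])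
  then show ?thesis by (simp add: E_single_def suminf_mult[OF summable_E_i])
qed

end

theorem mainTheorem7:
  fixes \<eta> :: "nat \<Rightarrow> real" and \<rho> :: real and NB :: nat
  assumes "\<And>i. \<eta> i \<ge> 0"
    and "summable \<eta>"
    and "infinite {i. \<eta> i > 0}"
  shows "((\<lambda>NA. E_seq \<eta> NA NB \<rho>) \<longlongrightarrow> 2 * (1 - \<rho>) * E_single \<eta> NB) sequentially
    \<and> (\<rho> > 1/2 \<longrightarrow> eventually (\<lambda>NA. E_seq \<eta> NA NB \<rho> < E_single \<eta> NB) sequentially)
    \<and> (\<rho> < 1/2 \<longrightarrow> eventually (\<lambda>NA. E_seq \<eta> NA NB \<rho> > E_single \<eta> NB) sequentially)"
proof -
  interpret spectrum \<eta> using assms by unfold_locales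
  note lim = E_seq_tendsto[of NB \<rho>]
  have E: "E_single \<eta> NB > 0" by (rule E_single_pos)
  have "\<rho> > 1/2 \<Longrightarrow> 2 * (1 - \<rho>) * E_single \<eta> NB < E_single \<eta> NB"
    and "\<rho> < 1/2 \<Longrightarrow> 2 * (1 - \<rho>) * E_single \<eta> NB > E_single \<eta> NB"
    using E by (simp_all add: algebra_simps mult_less_cancel_right2 mult_less_cancel_right1)
  then show ?thesis
    using lim order_tendstoD(1)[OF lim, of "E_single \<eta> NB"] order_tendstoD(2)[OF lim, of "E_single \<eta> NB"]
    by simp
qed

end
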